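(* Let $\rho:(0,\infty)\to(0,\infty)$ be continuous with $\int_0^\infty\rho(r)(1\wedge r^2)r^{d-1}dr<\infty$ and $\int_0^1r^{d-1}\rho(r)^{-1}dr<\infty$. Let $\gamma(r):=\inf_{0<s\le r+1}\rho(s)$ for $r>0$, and assume $\gamma(r)>0$ for all $r>0$ and $\int_{\{|x|>1\}}\frac{e^{-2V(x)}}{\gamma(|x|)}dx<\infty$. Suppose there is $\alpha_0\in(0,1)$ with $$\int_1^\infty r^{d+\alpha_0-1}\rho(r)dr<\infty\quad\text{and}\quad\limsup_{|x|\to\infty}\frac{\sup_{|z|\ge|x|}e^{-V(z)}}{\gamma(|x|)|x|^{\alpha_0}}=0.$$ Then there is $C_1>0$ such that for all $f\in C_b^\infty(\mathbb R^d)$, $$\int\big(f(x)-\mu_V(f)\big)^2e^{V(x)}\gamma(|x|)\,\mu_V(dx)\le C_1D_{\rho,V}(f,f).$$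
   Context: Let $d\ge1$. $V:\mathbb R^d\to\mathbb R$ is a locally bounded measurable function such that $e^{-V}$ is bounded and $\int e^{-V(x)}dx<\infty$; $\mu_V(dx)=\frac{e^{-V(x)}}{\int e^{-V(y)}dy}dx$, $\mu_V(f)=\int f\,d\mu_V$. $C_b^\infty$ denotes smooth functions bounded with all derivatives. $D_{\rho,V}(f,f):=\frac12\iint(f(y)-f(x))^2\rho(|x-y|)\,dy\,\mu_V(dx)$. *)

theory Defs
  imports "HOL-Analysis.Analysis"
begin

text \<open>C_b^infinity: smooth functions which are bounded together with all their
  (partial) derivatives.  g bs is the iterated partial derivative of f along the
  basis directions in the list bs (the head of the list is the last derivative taken).\<close>
definition Cb_inf :: "('a::euclidean_space \<Rightarrow> real) set" where
  "Cb_inf = {f. \<exists>g :: 'a list \<Rightarrow> 'a \<Rightarrow> real.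
      g [] = f \<and>
      (\<forall>bs b x. set bs \<subseteq> Basis \<longrightarrow> b \<in> Basis \<longrightarrow>
          ((\<lambda>t. g bs (x + t *\<^sub>R b)) has_real_derivative g (b # bs) x) (at 0)) \<and>
      (\<forall>bs. set bs \<subseteq> Basis \<longrightarrow> continuous_on UNIV (g bs) \<and> bounded (range (g bs)))}"

definition ZV :: "('a::euclidean_space \<Rightarrow> real) \<Rightarrow> real" where
  "ZV V = (\<integral>y. exp (- V y) \<partial>lborel)"

definition muV :: "('a::euclidean_space \<Rightarrow> real) \<Rightarrow> 'a measure" where
  "muV V = density lborel (\<lambda>x. ennreal (exp (- V x) / ZV V))"

definition muV_int :: "('a::euclidean_space \<Rightarrow> real) \<Rightarrow> ('a \<Rightarrow> real) \<Rightarrow> real" where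
  "muV_int V f = (\<integral>x. f x \<partial>muV V)"

definition Dform :: "(real \<Rightarrow> real) \<Rightarrow> ('a::euclidean_space \<Rightarrow> real) \<Rightarrow> ('a \<Rightarrow> real) \<Rightarrow> ennreal" where
  "Dform \<rho> V f = (1/2) * (\<integral>\<^sup>+x. (\<integral>\<^sup>+y. ennreal ((f y - f x)\<^sup>2 * \<rho> (norm (x - y))) \<partial>lborel) \<partial>muV V)"

definition gammaf :: "(real \<Rightarrow> real) \<Rightarrow> real \<Rightarrow> real" where
  "gammaf \<rho> r = Inf {\<rho> s | s. 0 < s \<and> s \<le> r + 1}"

end

theory Submission
  imports Defs
begin

text \<open>
  Write \<gamma>(x) = gammaf \<rho> |x|, Z = ZV V, a = \<mu>_V(f), and let c be the
  average of f over the closed unit ball B.  Since e^V d\<mu>_V = dx/Z, the left-hand side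
  is (1/Z) \<integral> (f - a)^2 \<gamma> dx \<le> (2/Z) (\<integral> (f - c)^2 \<gamma> dx + (c - a)^2 \<integral> \<gamma> dx), and by
  Cauchy-Schwarz (c - a)^2 \<le> Z^-2 \<integral> (f - c)^2 \<gamma> dx \<cdot> \<integral> e^{-2V}/\<gamma> dx.  Both weight
  integrals are finite: the first by the integrability of \<rho> (comparing \<gamma> on spheres
  with \<rho> on windows of length one), the second by assumption.  It remains to bound
  \<integral> (f - c)^2 \<gamma> dx by the Dirichlet form.  Averaging over w \<in> B, the key observation is
  that |w - x| \<le> |x| + 1 forces \<gamma>(x) \<le> \<rho>(|x - w|), while e^{-V} is bounded below on B.
  Hence \<integral> (f - c)^2 \<gamma> dx \<le> (2Z / (|B| m)) D_{\<rho>,V}(f,f) whenever e^{-V} \<ge> m > 0 on B.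
\<close>

lemma gammaf_le:
  assumes rho_nonneg: "\<And>r. 0 < r \<Longrightarrow> 0 \<le> \<rho> r" and "0 < s" "s \<le> r + 1"
  shows "gammaf \<rho> r \<le> \<rho> s"
  unfolding gammaf_def
proof (rule cInf_lower)
  show "bdd_below {\<rho> s |s. 0 < s \<and> s \<le> r + 1}"
    using rho_nonneg by (auto intro!: bdd_belowI[of _ 0])
qed (use assms in blast)

lemma gammaf_nonneg:
  assumes rho_nonneg: "\<And>r. 0 < r \<Longrightarrow> 0 \<le> \<rho> r" and "0 \<le> r"
  shows "0 \<le> gammaf \<rho> r"
  unfolding gammaf_def
  by (rule cInf_greatest) (use assms in \<open>auto intro!: exI[of _ "r + 1"]\<close>)

lemma gammaf_antimono:
  assumes rho_nonneg: "\<And>r. 0 < r \<Longrightarrow> 0 \<le> \<rho> r" and "0 \<le> r" "r \<le> r'"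
  shows "gammaf \<rho> r' \<le> gammaf \<rho> r"
  unfolding gammaf_def
proof (rule cInf_superset_mono)
  show "{\<rho> s |s. 0 < s \<and> s \<le> r + 1} \<noteq> {}"
    using assms(2) by (auto intro!: exI[of _ "r + 1"])
  show "bdd_below {\<rho> s |s. 0 < s \<and> s \<le> r' + 1}"
    using rho_nonneg by (auto intro!: bdd_belowI[of _ 0])
qed (use assms(3) in auto)

text \<open>Monotonicity gives measurability of the radial weight without any regularity of \<rho>.\<close>

lemma gammaf_norm_measurable:
  assumes rho_nonneg: "\<And>r. 0 < r \<Longrightarrow> 0 \<le> \<rho> r"
  shows "(\<lambda>x::'a::euclidean_space. gammaf \<rho> (norm x)) \<in> borel_measurable borel"
proof -
  have "mono (\<lambda>r. - gammaf \<rho> (max 0 r))"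
    by (rule monoI) (auto intro!: gammaf_antimono[of \<rho>, OF rho_nonneg])
  then have "(\<lambda>r. - (- gammaf \<rho> (max 0 r))) \<in> borel_measurable borel"
    using borel_measurable_mono by measurable
  then have "(\<lambda>r. gammaf \<rho> (max 0 r)) \<in> borel_measurable borel"
    by simp
  then have "(\<lambda>x::'a. gammaf \<rho> (max 0 (norm x))) \<in> borel_measurable borel"
    by measurable
  then show ?thesis
    by simp
qed

lemma gammaf_norm_pos:
  assumes rho_nonneg: "\<And>r. 0 < r \<Longrightarrow> 0 \<le> \<rho> r" and gamma_pos: "\<And>r. 0 < r \<Longrightarrow> 0 < gammaf \<rho> r"
  shows "0 < gammaf \<rho> (norm x)"
proof (cases "x = 0")
  case True
  have "0 < gammaf \<rho> 1"
    by (rule gamma_pos) simp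
  also have "\<dots> \<le> gammaf \<rho> 0"
    by (rule gammaf_antimono[of \<rho>, OF rho_nonneg]) auto
  finally show ?thesis
    using True by simp
qed (simp add: gamma_pos)

text \<open>The key comparison: for a point w of the unit ball, |w - x| \<le> |x| + 1, so the weight
  at x is dominated by the jump kernel between x and w.\<close>

lemma gammaf_le_rho_dist:
  assumes rho_nonneg: "\<And>r. 0 < r \<Longrightarrow> 0 \<le> \<rho> r" and "norm w \<le> 1" "x \<noteq> w"
  shows "gammaf \<rho> (norm x) \<le> \<rho> (norm (w - x))"
  using assms norm_triangle_ineq4[of w x] by (intro gammaf_le[of \<rho>, OF rho_nonneg]) auto

section \<open>Finiteness of the weight integrals\<close>

lemma power_diff_le:
  fixes x y :: real
  assumes "0 \<le> y" "y \<le> x"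
  shows "x ^ n - y ^ n \<le> real n * x ^ (n - 1) * (x - y)"
proof -
  have "(\<Sum>i<n. y ^ (n - Suc i) * x ^ i) \<le> (\<Sum>i<n. x ^ (n - 1))"
  proof (rule sum_mono)
    fix i
    assume i: "i \<in> {..<n}"
    then have "y ^ (n - Suc i) * x ^ i \<le> x ^ (n - Suc i) * x ^ i"
      using assms by (intro mult_right_mono power_mono) auto
    also have "\<dots> = x ^ (n - 1)"
      using i by (simp add: power_add[symmetric])
    finally show "y ^ (n - Suc i) * x ^ i \<le> x ^ (n - 1)" .
  qed
  then show ?thesis
    using assms by (simp add: power_diff_sumr2[of x n y] mult_left_mono mult.commute)
qed

lemma annulus_emeasure_le:
  assumes "1 \<le> s"
  shows "emeasure lborel {x::'a::euclidean_space. s - 1 \<le> norm x \<and> norm x < s}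
     \<le> ennreal (unit_ball_vol DIM('a) * DIM('a) * s ^ (DIM('a) - 1))"
proof -
  have shell: "{x::'a. s - 1 \<le> norm x \<and> norm x < s} = ball 0 s - ball 0 (s - 1)"
    by auto
  have "(s - 1) ^ DIM('a) \<le> s ^ DIM('a)"
    using assms by (intro power_mono) auto
  then have "emeasure lborel {x::'a. s - 1 \<le> norm x \<and> norm x < s}
      = ennreal (unit_ball_vol DIM('a) * (s ^ DIM('a) - (s - 1) ^ DIM('a)))"
    unfolding shell using assms
    by (subst emeasure_Diff) (auto simp: emeasure_ball ennreal_minus[symmetric] algebra_simps)
  also have "\<dots> \<le> ennreal (unit_ball_vol DIM('a) * DIM('a) * s ^ (DIM('a) - 1))"
    using power_diff_le[of "s - 1" s "DIM('a)"] assms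
    by (intro ennreal_leI) (simp add: mult.assoc mult_left_mono)
  finally show ?thesis .
qed

lemma unit_window_measurable [measurable]:
  "(\<lambda>p. indicator {norm (fst p)<..norm (fst p) + 1} (snd p) :: ennreal)
     \<in> borel_measurable (lborel \<Otimes>\<^sub>M lborel :: ('a::euclidean_space \<times> real) measure)"
proof -
  let ?S = "{p \<in> space (lborel \<Otimes>\<^sub>M lborel :: ('a \<times> real) measure).
              norm (fst p) < snd p \<and> snd p \<le> norm (fst p) + 1}"
  have S: "?S \<in> sets (lborel \<Otimes>\<^sub>M lborel)"
    by measurable
  have window: "(\<lambda>p. indicator {norm (fst p)<..norm (fst p) + 1} (snd p)) = indicator ?S"
    by (auto simp: fun_eq_iff indicator_def space_pair_measure)
  show ?thesis
    unfolding window by (rule borel_measurable_indicator[OF S])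
qed

lemma unit_window_radial_le:
  fixes g :: "real \<Rightarrow> real"
  assumes g_meas [measurable]: "g \<in> borel_measurable borel"
    and g_nonneg: "\<And>s. 0 \<le> g s" and g_vanish: "\<And>s. s < 1 \<Longrightarrow> g s = 0"
  shows "(\<integral>\<^sup>+x. \<integral>\<^sup>+s. ennreal (g s) * indicator {norm (x::'a::euclidean_space)<..norm x + 1} s
            \<partial>lborel \<partial>lborel)
    \<le> ennreal (unit_ball_vol DIM('a) * DIM('a)) * (\<integral>\<^sup>+s. ennreal (g s * s ^ (DIM('a) - 1)) \<partial>lborel)"
proof -
  define d where "d = DIM('a)"
  have "(\<integral>\<^sup>+x. \<integral>\<^sup>+s. ennreal (g s) * indicator {norm (x::'a)<..norm x + 1} s \<partial>lborel \<partial>lborel)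
      = (\<integral>\<^sup>+s. \<integral>\<^sup>+x. ennreal (g s) * indicator {norm (x::'a)<..norm x + 1} s \<partial>lborel \<partial>lborel)"
    by (rule lborel_pair.Fubini'[symmetric]) measurable
  also have "\<dots> \<le> (\<integral>\<^sup>+s. ennreal (unit_ball_vol d * d) * ennreal (g s * s ^ (d - 1)) \<partial>lborel)"
  proof (rule nn_integral_mono)
    fix s :: real
    show "(\<integral>\<^sup>+x. ennreal (g s) * indicator {norm (x::'a)<..norm x + 1} s \<partial>lborel)
        \<le> ennreal (unit_ball_vol d * d) * ennreal (g s * s ^ (d - 1))"
    proof (cases "1 \<le> s")
      case True
      have "(\<integral>\<^sup>+x. ennreal (g s) * indicator {norm (x::'a)<..norm x + 1} s \<partial>lborel)
          = (\<integral>\<^sup>+x. ennreal (g s) * indicator {x::'a. s - 1 \<le> norm x \<and> norm x < s} x \<partial>lborel)"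
        by (intro nn_integral_cong) (auto simp: indicator_def)
      also have "\<dots> = ennreal (g s) * emeasure lborel {x::'a. s - 1 \<le> norm x \<and> norm x < s}"
        by (rule nn_integral_cmult_indicator) measurable
      also have "\<dots> \<le> ennreal (g s) * ennreal (unit_ball_vol d * d * s ^ (d - 1))"
        unfolding d_def by (intro mult_left_mono annulus_emeasure_le True) simp
      also have "\<dots> = ennreal (unit_ball_vol d * d) * ennreal (g s * s ^ (d - 1))"
        using True g_nonneg[of s] by (simp add: ennreal_mult'[symmetric] mult_ac)
      finally show ?thesis .
    qed (simp add: g_vanish)
  qed
  also have "\<dots> = ennreal (unit_ball_vol d * d) * (\<integral>\<^sup>+s. ennreal (g s * s ^ (d - 1)) \<partial>lborel)"
    by (rule nn_integral_cmult) measurable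
  finally show ?thesis
    unfolding d_def .
qed

lemma gammaf_norm_le_window:
  assumes rho_nonneg: "\<And>r. 0 < r \<Longrightarrow> 0 \<le> \<rho> r"
  shows "ennreal (gammaf \<rho> (norm x)) \<le> ennreal (gammaf \<rho> 0) * indicator (ball 0 1) x
    + (\<integral>\<^sup>+s. ennreal (indicator {1..} s * \<rho> s) * indicator {norm x<..norm x + 1} s \<partial>lborel)"
proof (cases "norm x < 1")
  case True
  then have "ennreal (gammaf \<rho> (norm x)) \<le> ennreal (gammaf \<rho> 0) * indicator (ball 0 1) x"
    by (auto intro!: ennreal_leI gammaf_antimono[of \<rho>, OF rho_nonneg])
  then show ?thesis
    by (rule order_trans) simp
next
  case False
  have "ennreal (gammaf \<rho> (norm x))
      = (\<integral>\<^sup>+s. ennreal (gammaf \<rho> (norm x)) * indicator {norm x<..norm x + 1} s \<partial>lborel)"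
    by (simp add: nn_integral_cmult_indicator)
  also have "\<dots> \<le> (\<integral>\<^sup>+s. ennreal (indicator {1..} s * \<rho> s) * indicator {norm x<..norm x + 1} s \<partial>lborel)"
    using False gammaf_le[of \<rho> _ "norm x", OF rho_nonneg]
    by (intro nn_integral_mono) (auto simp: indicator_def intro!: ennreal_leI)
  finally show ?thesis
    by (rule order_trans) simp
qed

text \<open>The weight itself is integrable: only the part of \<rho> on [1, \<infinity>) enters, where the
  integrability hypothesis on \<rho> is exactly the needed one.\<close>

lemma gammaf_norm_nn_integral_finite:
  fixes \<rho> :: "real \<Rightarrow> real"
  assumes rho_cont: "continuous_on {0<..} \<rho>"
    and rho_nonneg: "\<And>r. 0 < r \<Longrightarrow> 0 \<le> \<rho> r"
    and rho_int: "set_integrable lborel {0<..} (\<lambda>r. \<rho> r * min 1 (r\<^sup>2) * r ^ (DIM('a) - 1))"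
  shows "(\<integral>\<^sup>+x. ennreal (gammaf \<rho> (norm (x::'a::euclidean_space))) \<partial>lborel) < \<infinity>"
proof -
  define h where "h = (\<lambda>s. indicator {1..} s * \<rho> s)"
  have "continuous_on {1..} \<rho>"
    by (rule continuous_on_subset[OF rho_cont]) auto
  then have h_meas [measurable]: "h \<in> borel_measurable borel"
    using borel_measurable_continuous_on_indicator[of "{1..}" \<rho>] by (simp add: h_def)
  have [measurable]: "(\<lambda>x::'a. gammaf \<rho> (norm x)) \<in> borel_measurable borel" "ball (0::'a) 1 \<in> sets borel"
    by (simp_all add: gammaf_norm_measurable[of \<rho>, OF rho_nonneg])
  have "(\<integral>\<^sup>+x. \<integral>\<^sup>+s. ennreal (h s) * indicator {norm (x::'a)<..norm x + 1} s \<partial>lborel \<partial>lborel)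
      \<le> ennreal (unit_ball_vol DIM('a) * DIM('a)) * (\<integral>\<^sup>+s. ennreal (h s * s ^ (DIM('a) - 1)) \<partial>lborel)"
    using rho_nonneg by (intro unit_window_radial_le h_meas) (auto simp: h_def indicator_def)
  also have "\<dots> \<le> ennreal (unit_ball_vol DIM('a) * DIM('a)) * (\<integral>\<^sup>+s. ennreal (norm (indicator {0<..} s *\<^sub>R
      (\<rho> s * min 1 (s\<^sup>2) * s ^ (DIM('a) - 1)))) \<partial>lborel)"
    by (intro mult_left_mono nn_integral_mono ennreal_leI) (auto simp: h_def indicator_def min_def abs_mult)
  also have "\<dots> < \<infinity>"
    using rho_int by (simp add: set_integrable_def integrable_iff_bounded ennreal_mult_less_top)
  finally have windows_fin: "(\<integral>\<^sup>+x. \<integral>\<^sup>+s. ennreal (h s) * indicator {norm (x::'a)<..norm x + 1} s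
      \<partial>lborel \<partial>lborel) < \<infinity>" .
  have "(\<integral>\<^sup>+x. ennreal (gammaf \<rho> (norm (x::'a))) \<partial>lborel)
      \<le> (\<integral>\<^sup>+x. ennreal (gammaf \<rho> 0) * indicator (ball (0::'a) 1) x
           + (\<integral>\<^sup>+s. ennreal (h s) * indicator {norm x<..norm x + 1} s \<partial>lborel) \<partial>lborel)"
    unfolding h_def by (intro nn_integral_mono gammaf_norm_le_window rho_nonneg)
  also have "\<dots> = ennreal (gammaf \<rho> 0) * emeasure lborel (ball (0::'a) 1)
      + (\<integral>\<^sup>+x. \<integral>\<^sup>+s. ennreal (h s) * indicator {norm (x::'a)<..norm x + 1} s \<partial>lborel \<partial>lborel)"
    by (subst nn_integral_add) (auto simp: nn_integral_cmult_indicator)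
  also have "\<dots> < \<infinity>"
    using windows_fin by (simp add: emeasure_ball ennreal_mult_less_top)
  finally show ?thesis .
qed

text \<open>The dual weight e^{-2V}/\<gamma> is integrable: outside the unit ball by assumption, inside
  because e^{-V} is bounded and \<gamma> \<ge> gammaf \<rho> 1 > 0 there.\<close>

lemma inverse_weight_nn_integral_finite:
  fixes V :: "'a::euclidean_space \<Rightarrow> real" and \<rho> :: "real \<Rightarrow> real"
  assumes V_meas [measurable]: "V \<in> borel_measurable borel"
    and expV_le: "\<And>x. exp (- V x) \<le> E"
    and rho_nonneg: "\<And>r. 0 < r \<Longrightarrow> 0 \<le> \<rho> r"
    and gamma_pos: "\<And>r. 0 < r \<Longrightarrow> 0 < gammaf \<rho> r"
    and gamma_int: "set_integrable lborel {x. norm x > 1} (\<lambda>x. exp (- 2 * V x) / gammaf \<rho> (norm x))"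
  shows "(\<integral>\<^sup>+x. ennreal (exp (- 2 * V x) / gammaf \<rho> (norm x)) \<partial>lborel) < \<infinity>"
proof -
  define q where "q = (\<lambda>x::'a. exp (- 2 * V x) / gammaf \<rho> (norm x))"
  have [measurable]: "(\<lambda>x::'a. gammaf \<rho> (norm x)) \<in> borel_measurable borel"
    by (rule gammaf_norm_measurable[of \<rho>, OF rho_nonneg])
  have [measurable]: "cball (0::'a) 1 \<in> sets borel"
    by simp
  have [measurable]: "q \<in> borel_measurable borel"
    unfolding q_def by measurable
  have split: "ennreal (q x) \<le> ennreal (norm (indicator {x. norm x > 1} x *\<^sub>R q x))
       + ennreal (E\<^sup>2 / gammaf \<rho> 1) * indicator (cball 0 1) x" for x
  proof (cases "norm x > 1")
    case True
    then have "0 < gammaf \<rho> (norm x)"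
      by (intro gamma_pos) linarith
    then show ?thesis
      using True by (auto simp: q_def intro!: ennreal_leI add_increasing2)
  next
    case False
    have "exp (- 2 * V x) = (exp (- V x))\<^sup>2"
      by (simp add: power2_eq_square exp_add[symmetric])
    also have "\<dots> \<le> E\<^sup>2"
      by (rule power_mono[OF expV_le]) simp
    finally have "q x \<le> E\<^sup>2 / gammaf \<rho> 1"
      unfolding q_def using False gamma_pos[of 1] gammaf_antimono[of \<rho> "norm x" 1, OF rho_nonneg]
      by (intro frac_le) auto
    then show ?thesis
      using False by (auto intro!: ennreal_leI add_increasing)
  qed
  have "(\<integral>\<^sup>+x. ennreal (q x) \<partial>lborel)
      \<le> (\<integral>\<^sup>+x. ennreal (norm (indicator {x. norm x > 1} x *\<^sub>R q x))
          + ennreal (E\<^sup>2 / gammaf \<rho> 1) * indicator (cball 0 1) x \<partial>lborel)"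
    by (rule nn_integral_mono) (rule split)
  also have "\<dots> = (\<integral>\<^sup>+x. ennreal (norm (indicator {x. norm x > 1} x *\<^sub>R q x)) \<partial>lborel)
      + ennreal (E\<^sup>2 / gammaf \<rho> 1) * emeasure lborel (cball (0::'a) 1)"
    by (subst nn_integral_add) (auto simp: nn_integral_cmult_indicator)
  also have "\<dots> < \<infinity>"
    using gamma_int
    by (simp add: q_def set_integrable_def integrable_iff_bounded emeasure_cball ennreal_mult_less_top)
  finally show ?thesis
    unfolding q_def .
qed

lemma ZV_pos:
  fixes V :: "'a::euclidean_space \<Rightarrow> real"
  assumes "integrable lborel (\<lambda>x. exp (- V x))"
  shows "0 < ZV V"
proof -
  have "ZV V \<noteq> 0"
  proof
    assume "ZV V = 0"
    then have "AE x in lborel. exp (- V x) = 0"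
      using assms integral_nonneg_eq_0_iff_AE[of lborel "\<lambda>x. exp (- V x)"]
      by (simp add: ZV_def)
    then have "AE x in (lborel :: 'a measure). False"
      by simp
    then have "emeasure lborel (UNIV :: 'a set) = 0"
      using ae_filter_eq_bot_iff[of "lborel :: 'a measure"] trivial_limit_def by auto
    then show False
      by simp
  qed
  moreover have "0 \<le> ZV V"
    unfolding ZV_def by simp
  ultimately show ?thesis
    by simp
qed

lemma nn_integral_muV:
  fixes V :: "'a::euclidean_space \<Rightarrow> real"
  assumes [measurable]: "V \<in> borel_measurable borel" "g \<in> borel_measurable borel"
  shows "(\<integral>\<^sup>+x. g x \<partial>muV V) = (\<integral>\<^sup>+x. ennreal (exp (- V x) / ZV V) * g x \<partial>lborel)"
  unfolding muV_def by (rule nn_integral_density) measurable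

lemma muV_int_eq:
  fixes V :: "'a::euclidean_space \<Rightarrow> real"
  assumes [measurable]: "V \<in> borel_measurable borel" "f \<in> borel_measurable borel"
    and "integrable lborel (\<lambda>x. exp (- V x))"
  shows "muV_int V f = (\<integral>x. exp (- V x) / ZV V * f x \<partial>lborel)"
  unfolding muV_int_def muV_def
  by (subst integral_density) (use ZV_pos[OF assms(3)] in \<open>auto intro!: divide_nonneg_pos\<close>)

lemma muV_deviation_integral:
  fixes V :: "'a::euclidean_space \<Rightarrow> real"
  assumes V_meas [measurable]: "V \<in> borel_measurable borel"
    and expV_int: "integrable lborel (\<lambda>x. exp (- V x))"
    and f_meas [measurable]: "f \<in> borel_measurable borel" and f_bdd: "\<And>x. \<bar>f x\<bar> \<le> K"
  shows "integrable lborel (\<lambda>x. exp (- V x) / ZV V * (c - f x))"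
    and "c - muV_int V f = (\<integral>x. exp (- V x) / ZV V * (c - f x) \<partial>lborel)"
proof -
  define Z where "Z = ZV V"
  define p where "p = (\<lambda>x. exp (- V x) / Z)"
  have Z_pos: "0 < Z"
    using ZV_pos[OF expV_int] by (simp add: Z_def)
  have p_int: "integrable lborel (\<lambda>x. p x * a)" for a
    using expV_int by (simp add: p_def)
  have pf_int: "integrable lborel (\<lambda>x. p x * f x)"
    by (rule Bochner_Integration.integrable_bound[OF p_int[of K]])
      (use f_bdd Z_pos in \<open>auto simp: p_def abs_mult intro!: AE_I2 divide_right_mono mult_left_mono
         order_trans[OF f_bdd abs_ge_self]\<close>)
  show "integrable lborel (\<lambda>x. exp (- V x) / ZV V * (c - f x))"
    using Bochner_Integration.integrable_diff[OF p_int[of c] pf_int]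
    by (simp add: p_def Z_def right_diff_distrib)
  have "(\<integral>x. p x \<partial>lborel) = 1"
    using Z_pos by (simp add: p_def Z_def ZV_def)
  then have "c - muV_int V f = (\<integral>x. p x * c - p x * f x \<partial>lborel)"
    using p_int[of c] pf_int muV_int_eq[OF V_meas f_meas expV_int] by (simp add: p_def Z_def)
  then show "c - muV_int V f = (\<integral>x. exp (- V x) / ZV V * (c - f x) \<partial>lborel)"
    by (simp add: p_def Z_def right_diff_distrib)
qed

section \<open>Cauchy-Schwarz estimates\<close>

lemma Cauchy_Schwarz_nn_integral_real:
  fixes u w :: "'b \<Rightarrow> real"
  assumes [measurable]: "u \<in> borel_measurable M" "w \<in> borel_measurable M"
    and "\<And>x. 0 \<le> u x" "\<And>x. 0 \<le> w x"
  shows "(\<integral>\<^sup>+x. ennreal (u x * w x) \<partial>M)\<^sup>2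
    \<le> (\<integral>\<^sup>+x. ennreal ((u x)\<^sup>2) \<partial>M) * (\<integral>\<^sup>+x. ennreal ((w x)\<^sup>2) \<partial>M)"
  using Cauchy_Schwarz_nn_integral[of "\<lambda>x. ennreal (u x)" M "\<lambda>x. ennreal (w x)"] assms
  by (simp add: ennreal_mult ennreal_power)

lemma sq_dev_from_average_le:
  fixes f :: "'b \<Rightarrow> real"
  assumes f_meas [measurable]: "f \<in> borel_measurable M" and f_bdd: "\<And>w. \<bar>f w\<bar> \<le> K"
    and B_meas [measurable]: "B \<in> sets M" and B_vol: "emeasure M B = ennreal v"
    and v_pos: "0 < v"
  shows "ennreal ((f x - (\<integral>w. indicator B w * f w / v \<partial>M))\<^sup>2)
     \<le> ennreal (1 / v) * (\<integral>\<^sup>+w. ennreal (indicator B w * (f x - f w)\<^sup>2) \<partial>M)"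
proof -
  define c where "c = (\<integral>w. indicator B w * f w / v \<partial>M)"
  have ind_int: "integrable M (\<lambda>w. a * indicator B w :: real)" for a
    using B_vol by (intro integrable_mult_right integrable_real_indicator) auto
  have avg_int: "integrable M (\<lambda>w. indicator B w * f w / v)"
    by (rule Bochner_Integration.integrable_bound[OF ind_int[of "K / v"]])
      (use f_bdd v_pos in \<open>auto simp: indicator_def abs_mult intro!: AE_I2 divide_right_mono
         order_trans[OF _ abs_ge_self]\<close>)
  have dev_int: "integrable M (\<lambda>w. indicator B w * (f x - f w) / v)"
    using ind_int[of "f x / v"] avg_int
    by (auto simp: algebra_simps diff_divide_distrib intro!: Bochner_Integration.integrable_diff
        elim: integrable_cong[THEN iffD1, rotated -1])
  have "(\<integral>w. indicator B w * (f x - f w) / v \<partial>M)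
      = (\<integral>w. f x / v * indicator B w - indicator B w * f w / v \<partial>M)"
    by (intro Bochner_Integration.integral_cong) (auto simp: algebra_simps diff_divide_distrib)
  also have "\<dots> = f x / v * measure M B - c"
    unfolding c_def using ind_int[of "f x / v"] avg_int B_vol by simp
  also have "\<dots> = f x - c"
    using B_vol v_pos by (simp add: measure_def)
  finally have dev_eq: "f x - c = (\<integral>w. indicator B w * (f x - f w) / v \<partial>M)" ..
  have "ennreal \<bar>f x - c\<bar> \<le> (\<integral>\<^sup>+w. ennreal (norm (indicator B w * (f x - f w) / v)) \<partial>M)"
    unfolding dev_eq using integral_norm_bound_ennreal[OF dev_int] by simp
  also have "\<dots> = (\<integral>\<^sup>+w. ennreal (indicator B w / v * (indicator B w * \<bar>f x - f w\<bar>)) \<partial>M)"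
    using v_pos by (intro nn_integral_cong) (simp add: indicator_def abs_mult)
  finally have "(ennreal \<bar>f x - c\<bar>)\<^sup>2
      \<le> (\<integral>\<^sup>+w. ennreal (indicator B w / v * (indicator B w * \<bar>f x - f w\<bar>)) \<partial>M)\<^sup>2"
    by (rule power_mono) simp
  also have "\<dots> \<le> (\<integral>\<^sup>+w. ennreal ((indicator B w / v)\<^sup>2) \<partial>M)
      * (\<integral>\<^sup>+w. ennreal ((indicator B w * \<bar>f x - f w\<bar>)\<^sup>2) \<partial>M)"
    by (rule Cauchy_Schwarz_nn_integral_real) (use v_pos in auto)
  also have "(\<integral>\<^sup>+w. ennreal ((indicator B w / v)\<^sup>2) \<partial>M) = ennreal (1 / v)"
  proof -
    have "(\<integral>\<^sup>+w. ennreal ((indicator B w / v)\<^sup>2) \<partial>M) = (\<integral>\<^sup>+w. ennreal (1 / v\<^sup>2) * indicator B w \<partial>M)"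
      by (intro nn_integral_cong) (auto simp: indicator_def power_divide)
    also have "\<dots> = ennreal (1 / v)"
      using B_vol v_pos by (simp add: nn_integral_cmult_indicator ennreal_mult[symmetric] power2_eq_square)
    finally show ?thesis .
  qed
  also have "(\<integral>\<^sup>+w. ennreal ((indicator B w * \<bar>f x - f w\<bar>)\<^sup>2) \<partial>M)
      = (\<integral>\<^sup>+w. ennreal (indicator B w * (f x - f w)\<^sup>2) \<partial>M)"
    by (intro nn_integral_cong) (auto simp: indicator_def)
  finally show ?thesis
    by (simp add: c_def ennreal_power)
qed

lemma muV_mean_deviation_sq_le:
  fixes V :: "'a::euclidean_space \<Rightarrow> real" and g :: "'a \<Rightarrow> real"
  assumes V_meas [measurable]: "V \<in> borel_measurable borel"
    and expV_int: "integrable lborel (\<lambda>x. exp (- V x))"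
    and f_meas [measurable]: "f \<in> borel_measurable borel" and f_bdd: "\<And>x. \<bar>f x\<bar> \<le> K"
    and g_meas [measurable]: "g \<in> borel_measurable borel" and g_pos: "\<And>x. 0 < g x"
  shows "ennreal ((c - muV_int V f)\<^sup>2)
    \<le> ennreal (1 / (ZV V)\<^sup>2) * (\<integral>\<^sup>+x. ennreal ((f x - c)\<^sup>2 * g x) \<partial>lborel)
         * (\<integral>\<^sup>+x. ennreal (exp (- 2 * V x) / g x) \<partial>lborel)"
proof -
  define Z where "Z = ZV V"
  define p where "p = (\<lambda>x. exp (- V x) / Z)"
  have Z_pos: "0 < Z"
    using ZV_pos[OF expV_int] by (simp add: Z_def)
  have dev_int: "integrable lborel (\<lambda>x. p x * (c - f x))"
    and dev_eq: "c - muV_int V f = (\<integral>x. p x * (c - f x) \<partial>lborel)"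
    using muV_deviation_integral[OF V_meas expV_int f_meas f_bdd, of c] by (simp_all add: p_def Z_def)
  have factor: "norm (p x * (c - f x)) = \<bar>f x - c\<bar> * sqrt (g x) * (p x / sqrt (g x))" for x
    using g_pos[of x] Z_pos by (simp add: p_def abs_mult abs_minus_commute)
  have "ennreal \<bar>c - muV_int V f\<bar>
      \<le> (\<integral>\<^sup>+x. ennreal (\<bar>f x - c\<bar> * sqrt (g x) * (p x / sqrt (g x))) \<partial>lborel)"
    unfolding dev_eq factor[symmetric] using integral_norm_bound_ennreal[OF dev_int] by simp
  then have "(ennreal \<bar>c - muV_int V f\<bar>)\<^sup>2
      \<le> (\<integral>\<^sup>+x. ennreal (\<bar>f x - c\<bar> * sqrt (g x) * (p x / sqrt (g x))) \<partial>lborel)\<^sup>2"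
    by (rule power_mono) simp
  also have "\<dots> \<le> (\<integral>\<^sup>+x. ennreal ((\<bar>f x - c\<bar> * sqrt (g x))\<^sup>2) \<partial>lborel)
      * (\<integral>\<^sup>+x. ennreal ((p x / sqrt (g x))\<^sup>2) \<partial>lborel)"
    by (rule Cauchy_Schwarz_nn_integral_real)
      (use g_pos Z_pos in \<open>auto simp: p_def less_imp_le intro!: divide_nonneg_nonneg\<close>)
  also have "(\<integral>\<^sup>+x. ennreal ((\<bar>f x - c\<bar> * sqrt (g x))\<^sup>2) \<partial>lborel)
      = (\<integral>\<^sup>+x. ennreal ((f x - c)\<^sup>2 * g x) \<partial>lborel)"
    using g_pos by (intro nn_integral_cong) (simp add: power_mult_distrib less_imp_le)
  also have "(\<integral>\<^sup>+x. ennreal ((p x / sqrt (g x))\<^sup>2) \<partial>lborel)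
      = (\<integral>\<^sup>+x. ennreal (1 / Z\<^sup>2) * ennreal (exp (- 2 * V x) / g x) \<partial>lborel)"
  proof (intro nn_integral_cong)
    fix x
    have "(p x / sqrt (g x))\<^sup>2 = 1 / Z\<^sup>2 * (exp (- 2 * V x) / g x)"
      using g_pos[of x] by (simp add: p_def power_divide power2_eq_square exp_add[symmetric] less_imp_le)
    then show "ennreal ((p x / sqrt (g x))\<^sup>2) = ennreal (1 / Z\<^sup>2) * ennreal (exp (- 2 * V x) / g x)"
      by (simp only: ennreal_mult'[symmetric] zero_le_divide_1_iff zero_le_power2)
  qed
  also have "\<dots> = ennreal (1 / Z\<^sup>2) * (\<integral>\<^sup>+x. ennreal (exp (- 2 * V x) / g x) \<partial>lborel)"
    by (rule nn_integral_cmult) measurable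
  finally show ?thesis
    by (simp add: Z_def ennreal_power mult_ac)
qed

definition variance_const :: "('a::euclidean_space \<Rightarrow> real) \<Rightarrow> ('a \<Rightarrow> real) \<Rightarrow> ennreal" where
  "variance_const V g = ennreal (2 / ZV V) * (1 + ennreal (1 / (ZV V)\<^sup>2)
      * (\<integral>\<^sup>+x. ennreal (g x) \<partial>lborel) * (\<integral>\<^sup>+x. ennreal (exp (- 2 * V x) / g x) \<partial>lborel))"

lemma sq_diff_le_two_sq: "((p::real) + q)\<^sup>2 \<le> 2 * p\<^sup>2 + 2 * q\<^sup>2"
  using zero_le_power2[of "p - q"] by (simp add: power2_eq_square algebra_simps)

lemma muV_weighted_variance_le:
  fixes V :: "'a::euclidean_space \<Rightarrow> real" and g :: "'a \<Rightarrow> real"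
  assumes V_meas [measurable]: "V \<in> borel_measurable borel"
    and expV_int: "integrable lborel (\<lambda>x. exp (- V x))"
    and f_meas [measurable]: "f \<in> borel_measurable borel" and f_bdd: "\<And>x. \<bar>f x\<bar> \<le> K"
    and g_meas [measurable]: "g \<in> borel_measurable borel" and g_pos: "\<And>x. 0 < g x"
  shows "(\<integral>\<^sup>+x. ennreal ((f x - muV_int V f)\<^sup>2 * exp (V x) * g x) \<partial>muV V)
    \<le> variance_const V g * (\<integral>\<^sup>+x. ennreal ((f x - c)\<^sup>2 * g x) \<partial>lborel)"
proof -
  define Z where "Z = ZV V"
  define a where "a = muV_int V f"
  define A where "A = (\<integral>\<^sup>+x. ennreal ((f x - c)\<^sup>2 * g x) \<partial>lborel)"
  define G where "G = (\<integral>\<^sup>+x. ennreal (g x) \<partial>lborel)"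
  define W where "W = (\<integral>\<^sup>+x. ennreal (exp (- 2 * V x) / g x) \<partial>lborel)"
  have Z_pos: "0 < Z"
    using ZV_pos[OF expV_int] by (simp add: Z_def)
  have pointwise: "ennreal (exp (- V x) / Z) * ennreal ((f x - a)\<^sup>2 * exp (V x) * g x)
      \<le> ennreal (2 / Z) * (ennreal ((f x - c)\<^sup>2 * g x) + ennreal ((c - a)\<^sup>2) * ennreal (g x))" for x
  proof -
    have "(f x - a)\<^sup>2 * (g x / Z) \<le> (2 * (f x - c)\<^sup>2 + 2 * (c - a)\<^sup>2) * (g x / Z)"
      using sq_diff_le_two_sq[of "f x - c" "c - a"] g_pos[of x] Z_pos by (intro mult_right_mono) auto
    moreover have "exp (- V x) / Z * ((f x - a)\<^sup>2 * exp (V x) * g x) = (f x - a)\<^sup>2 * (g x / Z)"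
      by (simp add: exp_minus field_simps)
    moreover have "2 / Z * ((f x - c)\<^sup>2 * g x + (c - a)\<^sup>2 * g x)
        = (2 * (f x - c)\<^sup>2 + 2 * (c - a)\<^sup>2) * (g x / Z)"
      by (simp add: algebra_simps)
    ultimately have "exp (- V x) / Z * ((f x - a)\<^sup>2 * exp (V x) * g x)
        \<le> 2 / Z * ((f x - c)\<^sup>2 * g x + (c - a)\<^sup>2 * g x)"
      by linarith
    then show ?thesis
      using g_pos[of x] Z_pos
      by (simp add: ennreal_mult'[symmetric] ennreal_mult''[symmetric] ennreal_plus[symmetric]
          ennreal_leI del: ennreal_plus)
  qed
  have "(\<integral>\<^sup>+x. ennreal ((f x - a)\<^sup>2 * exp (V x) * g x) \<partial>muV V)
      = (\<integral>\<^sup>+x. ennreal (exp (- V x) / Z) * ennreal ((f x - a)\<^sup>2 * exp (V x) * g x) \<partial>lborel)"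
    unfolding Z_def by (rule nn_integral_muV) measurable
  also have "\<dots> \<le> (\<integral>\<^sup>+x. ennreal (2 / Z) * (ennreal ((f x - c)\<^sup>2 * g x)
      + ennreal ((c - a)\<^sup>2) * ennreal (g x)) \<partial>lborel)"
    by (rule nn_integral_mono) (rule pointwise)
  also have "\<dots> = ennreal (2 / Z) * (A + ennreal ((c - a)\<^sup>2) * G)"
    unfolding A_def G_def by (simp add: nn_integral_cmult nn_integral_add)
  also have "\<dots> \<le> ennreal (2 / Z) * (A + ennreal (1 / Z\<^sup>2) * A * W * G)"
    using muV_mean_deviation_sq_le[OF V_meas expV_int f_meas f_bdd g_meas g_pos, of c]
    by (intro mult_left_mono add_left_mono mult_right_mono) (simp_all add: Z_def a_def A_def W_def)
  also have "\<dots> = variance_const V g * A"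
    by (simp add: variance_const_def Z_def G_def W_def algebra_simps)
  finally show ?thesis
    by (simp add: a_def A_def)
qed

section \<open>Comparison with the Dirichlet form\<close>

text \<open>\<rho> is only continuous on (0, \<infinity>), but its value at 0 is irrelevant in the Dirichlet
  integrand, which vanishes on the diagonal; so the integrand is jointly measurable.\<close>

lemma Dform_integrand_measurable:
  fixes f :: "'a::euclidean_space \<Rightarrow> real" and \<rho> :: "real \<Rightarrow> real"
  assumes rho_cont: "continuous_on {0<..} \<rho>" and f_meas [measurable]: "f \<in> borel_measurable borel"
  shows "(\<lambda>(x, y). ennreal ((f y - f x)\<^sup>2 * \<rho> (norm (x - y))))
     \<in> borel_measurable (lborel \<Otimes>\<^sub>M lborel)"
proof -
  define \<rho>' where "\<rho>' = (\<lambda>r. indicator {0<..} r *\<^sub>R \<rho> r)"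
  have [measurable]: "\<rho>' \<in> borel_measurable borel"
    unfolding \<rho>'_def by (rule borel_measurable_continuous_on_indicator) (use rho_cont in auto)
  have "(\<lambda>(x, y). ennreal ((f y - f x)\<^sup>2 * \<rho> (norm (x - y))))
      = (\<lambda>(x::'a, y). ennreal ((f y - f x)\<^sup>2 * \<rho>' (norm (x - y))))"
  proof (intro ext, clarify)
    fix x y :: 'a
    show "ennreal ((f y - f x)\<^sup>2 * \<rho> (norm (x - y))) = ennreal ((f y - f x)\<^sup>2 * \<rho>' (norm (x - y)))"
      by (cases "x = y") (auto simp: \<rho>'_def)
  qed
  also have "\<dots> \<in> borel_measurable (lborel \<Otimes>\<^sub>M lborel)"
    by measurable
  finally show ?thesis .
qed

lemma Dform_eq_lborel:
  fixes V :: "'a::euclidean_space \<Rightarrow> real"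
  assumes [measurable]: "V \<in> borel_measurable borel"
    and rho_cont: "continuous_on {0<..} \<rho>" and f_meas: "f \<in> borel_measurable borel"
  shows "2 * Dform \<rho> V f = (\<integral>\<^sup>+x. ennreal (exp (- V x) / ZV V)
      * (\<integral>\<^sup>+y. ennreal ((f y - f x)\<^sup>2 * \<rho> (norm (x - y))) \<partial>lborel) \<partial>lborel)"
proof -
  have [measurable]: "(\<lambda>x. \<integral>\<^sup>+y. ennreal ((f y - f x)\<^sup>2 * \<rho> (norm (x - y))) \<partial>lborel)
      \<in> borel_measurable borel"
    using lborel.borel_measurable_nn_integral[OF Dform_integrand_measurable[OF rho_cont f_meas]]
    by simp
  have "(2::ennreal) * (1 / 2) = 1"
    by (simp add: ennreal_times_divide ennreal_divide_self)
  then have "2 * Dform \<rho> V f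
      = (\<integral>\<^sup>+x. \<integral>\<^sup>+y. ennreal ((f y - f x)\<^sup>2 * \<rho> (norm (x - y))) \<partial>lborel \<partial>muV V)"
    by (simp add: Dform_def mult.assoc[symmetric])
  also have "\<dots> = (\<integral>\<^sup>+x. ennreal (exp (- V x) / ZV V)
      * (\<integral>\<^sup>+y. ennreal ((f y - f x)\<^sup>2 * \<rho> (norm (x - y))) \<partial>lborel) \<partial>lborel)"
    by (rule nn_integral_muV) measurable
  finally show ?thesis .
qed

lemma gammaf_weight_le_kernel:
  assumes rho_nonneg: "\<And>r. 0 < r \<Longrightarrow> 0 \<le> \<rho> r"
    and m0_pos: "0 < m0" and m0_le: "\<And>x. norm x \<le> 1 \<Longrightarrow> m0 \<le> exp (- V x)"
  shows "gammaf \<rho> (norm y) * (indicator (cball 0 1) x * (f y - f x)\<^sup>2)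
    \<le> 1 / m0 * (exp (- V x) * ((f y - f x)\<^sup>2 * \<rho> (norm (x - y))))"
proof (cases "norm x \<le> 1 \<and> x \<noteq> y")
  case True
  then have \<gamma>_le: "gammaf \<rho> (norm y) \<le> \<rho> (norm (x - y))" and exp_ge: "1 \<le> 1 / m0 * exp (- V x)"
    using gammaf_le_rho_dist[of \<rho> x y, OF rho_nonneg] m0_le[of x] m0_pos by (auto simp: field_simps)
  have "gammaf \<rho> (norm y) * (indicator (cball 0 1) x * (f y - f x)\<^sup>2)
      = 1 * ((f y - f x)\<^sup>2 * gammaf \<rho> (norm y))"
    using True by simp
  also have "\<dots> \<le> (1 / m0 * exp (- V x)) * ((f y - f x)\<^sup>2 * \<rho> (norm (x - y)))"
    using exp_ge \<gamma>_le gammaf_nonneg[of \<rho> "norm y", OF rho_nonneg]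
    by (intro mult_mono mult_left_mono) auto
  finally show ?thesis
    by (simp add: mult_ac)
next
  case False
  have "0 \<le> (f y - f x)\<^sup>2 * \<rho> (norm (x - y))"
    using rho_nonneg[of "norm (x - y)"] by (cases "x = y") auto
  then show ?thesis
    using False m0_pos by auto
qed

definition ball_avg :: "('a::euclidean_space \<Rightarrow> real) \<Rightarrow> real" where
  "ball_avg f = (\<integral>x. indicator (cball 0 1) x * f x / unit_ball_vol DIM('a) \<partial>lborel)"

lemma ball_deviation_le_kernel:
  fixes f :: "'a::euclidean_space \<Rightarrow> real"
  assumes rho_nonneg: "\<And>r. 0 < r \<Longrightarrow> 0 \<le> \<rho> r"
    and m0_pos: "0 < m0" and m0_le: "\<And>x. norm x \<le> 1 \<Longrightarrow> m0 \<le> exp (- V x)"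
    and f_meas [measurable]: "f \<in> borel_measurable borel" and f_bdd: "\<And>x. \<bar>f x\<bar> \<le> K"
  shows "ennreal ((f y - ball_avg f)\<^sup>2 * gammaf \<rho> (norm y))
    \<le> (\<integral>\<^sup>+x. ennreal (exp (- V x) / (unit_ball_vol DIM('a) * m0))
          * ennreal ((f y - f x)\<^sup>2 * \<rho> (norm (x - y))) \<partial>lborel)"
proof -
  define v where "v = unit_ball_vol DIM('a)"
  define \<gamma> where "\<gamma> = gammaf \<rho> (norm y)"
  have [measurable]: "cball (0::'a) 1 \<in> sets borel"
    by simp
  have v_pos: "0 < v" and \<gamma>_nonneg: "0 \<le> \<gamma>"
    by (simp_all add: v_def \<gamma>_def gammaf_nonneg[of \<rho>, OF rho_nonneg])
  have "ennreal ((f y - ball_avg f)\<^sup>2) \<le> ennreal (1 / v)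
      * (\<integral>\<^sup>+x. ennreal (indicator (cball 0 1) x * (f y - f x)\<^sup>2) \<partial>lborel)"
    unfolding ball_avg_def v_def
    by (rule sq_dev_from_average_le[where K = K]) (simp_all add: f_bdd emeasure_cball)
  then have "ennreal \<gamma> * ennreal ((f y - ball_avg f)\<^sup>2) \<le> ennreal \<gamma> * ennreal (1 / v)
      * (\<integral>\<^sup>+x. ennreal (indicator (cball 0 1) x * (f y - f x)\<^sup>2) \<partial>lborel)"
    by (simp add: mult_left_mono mult.assoc)
  then have "ennreal ((f y - ball_avg f)\<^sup>2 * \<gamma>) \<le> ennreal (\<gamma> / v)
      * (\<integral>\<^sup>+x. ennreal (indicator (cball 0 1) x * (f y - f x)\<^sup>2) \<partial>lborel)"
    using \<gamma>_nonneg v_pos by (simp add: ennreal_mult[symmetric] mult.commute)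
  also have "\<dots> = (\<integral>\<^sup>+x. ennreal (\<gamma> / v * (indicator (cball 0 1) x * (f y - f x)\<^sup>2)) \<partial>lborel)"
  proof -
    have "ennreal (\<gamma> / v) * (\<integral>\<^sup>+x. ennreal (indicator (cball 0 1) x * (f y - f x)\<^sup>2) \<partial>lborel)
        = (\<integral>\<^sup>+x. ennreal (\<gamma> / v) * ennreal (indicator (cball 0 1) x * (f y - f x)\<^sup>2) \<partial>lborel)"
      by (rule nn_integral_cmult[symmetric]) measurable
    also have "\<dots> = (\<integral>\<^sup>+x. ennreal (\<gamma> / v * (indicator (cball 0 1) x * (f y - f x)\<^sup>2)) \<partial>lborel)"
      by (intro nn_integral_cong ennreal_mult'[symmetric]) (use \<gamma>_nonneg v_pos in simp)
    finally show ?thesis .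
  qed
  also have "\<dots> \<le> (\<integral>\<^sup>+x. ennreal (exp (- V x) / (v * m0))
      * ennreal ((f y - f x)\<^sup>2 * \<rho> (norm (x - y))) \<partial>lborel)"
  proof (intro nn_integral_mono)
    fix x
    have "\<gamma> * (indicator (cball 0 1) x * (f y - f x)\<^sup>2)
        \<le> 1 / m0 * (exp (- V x) * ((f y - f x)\<^sup>2 * \<rho> (norm (x - y))))"
      unfolding \<gamma>_def by (rule gammaf_weight_le_kernel) (fact rho_nonneg m0_pos m0_le)+
    then have "\<gamma> / v * (indicator (cball 0 1) x * (f y - f x)\<^sup>2)
        \<le> exp (- V x) / (v * m0) * ((f y - f x)\<^sup>2 * \<rho> (norm (x - y)))"
      using v_pos by (simp add: divide_right_mono field_simps)
    then show "ennreal (\<gamma> / v * (indicator (cball 0 1) x * (f y - f x)\<^sup>2))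
        \<le> ennreal (exp (- V x) / (v * m0)) * ennreal ((f y - f x)\<^sup>2 * \<rho> (norm (x - y)))"
      using v_pos m0_pos by (simp add: ennreal_mult'[symmetric] ennreal_leI)
  qed
  finally show ?thesis
    by (simp add: v_def \<gamma>_def)
qed

lemma ball_average_deviation_le_Dform:
  fixes V :: "'a::euclidean_space \<Rightarrow> real" and \<rho> :: "real \<Rightarrow> real" and f :: "'a \<Rightarrow> real"
  assumes V_meas [measurable]: "V \<in> borel_measurable borel"
    and expV_int: "integrable lborel (\<lambda>x. exp (- V x))"
    and rho_cont: "continuous_on {0<..} \<rho>" and rho_nonneg: "\<And>r. 0 < r \<Longrightarrow> 0 \<le> \<rho> r"
    and m0_pos: "0 < m0" and m0_le: "\<And>x. norm x \<le> 1 \<Longrightarrow> m0 \<le> exp (- V x)"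
    and f_meas [measurable]: "f \<in> borel_measurable borel" and f_bdd: "\<And>x. \<bar>f x\<bar> \<le> K"
  shows "(\<integral>\<^sup>+y. ennreal ((f y - ball_avg f)\<^sup>2 * gammaf \<rho> (norm y)) \<partial>lborel)
    \<le> ennreal (2 * ZV V / (unit_ball_vol DIM('a) * m0)) * Dform \<rho> V f"
proof -
  define k where "k = 1 / (unit_ball_vol DIM('a) * m0)"
  define Z where "Z = ZV V"
  define F where "F = (\<lambda>x y. ennreal ((f y - f x)\<^sup>2 * \<rho> (norm (x - y))))"
  have k_pos: "0 < k" and Z_pos: "0 < Z"
    using m0_pos ZV_pos[OF expV_int] by (simp_all add: k_def Z_def)
  have [measurable]: "case_prod F \<in> borel_measurable (lborel \<Otimes>\<^sub>M lborel)"
    unfolding F_def by (rule Dform_integrand_measurable[OF rho_cont f_meas])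
  have inner_meas [measurable]: "(\<lambda>x. \<integral>\<^sup>+y. F x y \<partial>lborel) \<in> borel_measurable lborel"
    by (rule lborel.borel_measurable_nn_integral) measurable
  have "(\<integral>\<^sup>+y. ennreal ((f y - ball_avg f)\<^sup>2 * gammaf \<rho> (norm y)) \<partial>lborel)
      \<le> (\<integral>\<^sup>+y. \<integral>\<^sup>+x. ennreal (k * exp (- V x)) * F x y \<partial>lborel \<partial>lborel)"
  proof (rule nn_integral_mono)
    fix y
    show "ennreal ((f y - ball_avg f)\<^sup>2 * gammaf \<rho> (norm y))
        \<le> (\<integral>\<^sup>+x. ennreal (k * exp (- V x)) * F x y \<partial>lborel)"
      using ball_deviation_le_kernel[of \<rho>, OF rho_nonneg m0_pos m0_le f_meas f_bdd, where y = y]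
      by (simp add: k_def F_def)
  qed
  also have "\<dots> = (\<integral>\<^sup>+x. \<integral>\<^sup>+y. ennreal (k * exp (- V x)) * F x y \<partial>lborel \<partial>lborel)"
    by (rule lborel_pair.Fubini') measurable
  also have "\<dots> = (\<integral>\<^sup>+x. ennreal (k * Z) * (ennreal (exp (- V x) / Z) * (\<integral>\<^sup>+y. F x y \<partial>lborel)) \<partial>lborel)"
  proof (rule nn_integral_cong)
    fix x
    have "ennreal (k * exp (- V x)) = ennreal (k * Z) * ennreal (exp (- V x) / Z)"
      using k_pos Z_pos by (simp add: ennreal_mult[symmetric])
    then show "(\<integral>\<^sup>+y. ennreal (k * exp (- V x)) * F x y \<partial>lborel)
        = ennreal (k * Z) * (ennreal (exp (- V x) / Z) * (\<integral>\<^sup>+y. F x y \<partial>lborel))"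
      by (simp add: nn_integral_cmult mult.assoc)
  qed
  also have "\<dots> = ennreal (k * Z) * (\<integral>\<^sup>+x. ennreal (exp (- V x) / Z) * (\<integral>\<^sup>+y. F x y \<partial>lborel) \<partial>lborel)"
    by (rule nn_integral_cmult) measurable
  also have "\<dots> = ennreal (k * Z) * (2 * Dform \<rho> V f)"
    by (simp add: Dform_eq_lborel[OF V_meas rho_cont f_meas] F_def Z_def)
  also have "\<dots> = ennreal (2 * (k * Z)) * Dform \<rho> V f"
    using k_pos Z_pos by (simp add: ennreal_mult mult_ac)
  finally show ?thesis
    by (simp add: k_def Z_def)
qed

section \<open>The weighted Poincare inequality\<close>

lemma Cb_inf_bounded_measurable:
  fixes f :: "'a::euclidean_space \<Rightarrow> real"
  assumes "f \<in> Cb_inf"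
  shows "f \<in> borel_measurable borel" and "\<exists>K. \<forall>x. \<bar>f x\<bar> \<le> K"
proof -
  obtain g where "g [] = f" "continuous_on UNIV (g [])" "bounded (range (g []))"
    using assms unfolding Cb_inf_def by fastforce
  then show "f \<in> borel_measurable borel" and "\<exists>K. \<forall>x. \<bar>f x\<bar> \<le> K"
    by (auto simp: bounded_iff intro: borel_measurable_continuous_onI)
qed

lemma weighted_poincare_bounded:
  fixes V :: "'a::euclidean_space \<Rightarrow> real" and \<rho> :: "real \<Rightarrow> real" and f :: "'a \<Rightarrow> real"
  assumes V_meas: "V \<in> borel_measurable borel"
    and expV_int: "integrable lborel (\<lambda>x. exp (- V x))"
    and rho_cont: "continuous_on {0<..} \<rho>" and rho_nonneg: "\<And>r. 0 < r \<Longrightarrow> 0 \<le> \<rho> r"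
    and gamma_pos: "\<And>r. 0 < r \<Longrightarrow> 0 < gammaf \<rho> r"
    and m0_pos: "0 < m0" and m0_le: "\<And>x. norm x \<le> 1 \<Longrightarrow> m0 \<le> exp (- V x)"
    and f_meas: "f \<in> borel_measurable borel" and f_bdd: "\<And>x. \<bar>f x\<bar> \<le> K"
  shows "(\<integral>\<^sup>+x. ennreal ((f x - muV_int V f)\<^sup>2 * exp (V x) * gammaf \<rho> (norm x)) \<partial>muV V)
    \<le> variance_const V (\<lambda>x. gammaf \<rho> (norm x))
      * (ennreal (2 * ZV V / (unit_ball_vol DIM('a) * m0)) * Dform \<rho> V f)"
proof -
  have "(\<integral>\<^sup>+x. ennreal ((f x - muV_int V f)\<^sup>2 * exp (V x) * gammaf \<rho> (norm x)) \<partial>muV V)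
      \<le> variance_const V (\<lambda>x. gammaf \<rho> (norm x))
        * (\<integral>\<^sup>+y. ennreal ((f y - ball_avg f)\<^sup>2 * gammaf \<rho> (norm y)) \<partial>lborel)"
    by (rule muV_weighted_variance_le[OF V_meas expV_int f_meas f_bdd
          gammaf_norm_measurable[of \<rho>, OF rho_nonneg] gammaf_norm_pos[of \<rho>, OF rho_nonneg gamma_pos]])
  also have "\<dots> \<le> variance_const V (\<lambda>x. gammaf \<rho> (norm x))
      * (ennreal (2 * ZV V / (unit_ball_vol DIM('a) * m0)) * Dform \<rho> V f)"
    by (intro mult_left_mono ball_average_deviation_le_Dform[OF V_meas expV_int rho_cont rho_nonneg
          m0_pos m0_le f_meas f_bdd] zero_le)
  finally show ?thesis .
qed

theorem theorem4p1:
  fixes V :: "'a::euclidean_space \<Rightarrow> real" and \<rho> :: "real \<Rightarrow> real" and \<alpha>0 :: real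
  assumes V_meas: "V \<in> borel_measurable lborel"
    and V_locbdd: "\<And>K. compact K \<Longrightarrow> bounded (V ` K)"
    and expV_bdd: "bounded (range (\<lambda>x. exp (- V x)))"
    and expV_int: "integrable lborel (\<lambda>x. exp (- V x))"
    and rho_cont: "continuous_on {0<..} \<rho>"
    and rho_pos: "\<And>r. 0 < r \<Longrightarrow> 0 < \<rho> r"
    and rho_int1: "set_integrable lborel {0<..}
                     (\<lambda>r. \<rho> r * min 1 (r\<^sup>2) * r ^ (DIM('a) - 1))"
    and rho_int2: "set_integrable lborel {0<..1} (\<lambda>r. r ^ (DIM('a) - 1) / \<rho> r)"
    and gamma_pos: "\<And>r. 0 < r \<Longrightarrow> 0 < gammaf \<rho> r"
    and gamma_int: "set_integrable lborel {x. norm x > 1}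
                     (\<lambda>x. exp (- 2 * V x) / gammaf \<rho> (norm x))"
    and alpha0: "0 < \<alpha>0" "\<alpha>0 < 1"
    and rho_int3: "set_integrable lborel {1..}
                     (\<lambda>r. r powr (real DIM('a) + \<alpha>0 - 1) * \<rho> r)"
    and tail: "((\<lambda>x::'a. (SUP z\<in>{z. norm z \<ge> norm x}. exp (- V z))
                      / (gammaf \<rho> (norm x) * norm x powr \<alpha>0)) \<longlongrightarrow> 0) at_infinity"
  shows "\<exists>C1>0. \<forall>f\<in>Cb_inf.
           (\<integral>\<^sup>+x. ennreal ((f x - muV_int V f)\<^sup>2 * exp (V x) * gammaf \<rho> (norm x)) \<partial>muV V)
             \<le> ennreal C1 * Dform \<rho> V f"
proof -
  have V_borel: "V \<in> borel_measurable borel"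
    using V_meas by simp
  have rho_nonneg: "\<And>r. 0 < r \<Longrightarrow> 0 \<le> \<rho> r"
    using rho_pos less_imp_le by blast
  obtain E where E: "\<And>x. exp (- V x) \<le> E"
    using expV_bdd unfolding bounded_iff by auto
  obtain M where M: "\<And>x. x \<in> cball 0 1 \<Longrightarrow> \<bar>V x\<bar> \<le> M"
    using V_locbdd[of "cball 0 1"] unfolding bounded_iff by (metis compact_cball imageI real_norm_def)
  then have m0_le: "exp (- M) \<le> exp (- V x)" if "norm x \<le> 1" for x
    using that by fastforce
  define C0 where "C0 = variance_const V (\<lambda>x. gammaf \<rho> (norm x))"
  define k where "k = 2 * ZV V / (unit_ball_vol DIM('a) * exp (- M))"
  have k_pos: "0 < k"
    using ZV_pos[OF expV_int] by (simp add: k_def)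
  have "C0 < \<infinity>"
    using gammaf_norm_nn_integral_finite[OF rho_cont rho_nonneg rho_int1]
      inverse_weight_nn_integral_finite[OF V_borel E rho_nonneg gamma_pos gamma_int]
    by (simp add: C0_def variance_const_def ennreal_mult_less_top)
  then have C0_le: "C0 * ennreal k \<le> ennreal ((enn2real C0 + 1) * k)"
    using k_pos by (cases C0) (simp_all add: ennreal_mult[symmetric] ennreal_leI)
  show ?thesis
  proof (intro exI[of _ "(enn2real C0 + 1) * k"] conjI ballI)
    show "0 < (enn2real C0 + 1) * k"
      using k_pos by (simp add: add_nonneg_pos)
    fix f :: "'a \<Rightarrow> real"
    assume "f \<in> Cb_inf"
    then obtain K where f_meas: "f \<in> borel_measurable borel" and f_bdd: "\<And>x. \<bar>f x\<bar> \<le> K"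
      using Cb_inf_bounded_measurable by blast
    have "(\<integral>\<^sup>+x. ennreal ((f x - muV_int V f)\<^sup>2 * exp (V x) * gammaf \<rho> (norm x)) \<partial>muV V)
        \<le> C0 * ennreal k * Dform \<rho> V f"
      using weighted_poincare_bounded[OF V_borel expV_int rho_cont rho_nonneg gamma_pos _ m0_le f_meas f_bdd]
      by (simp add: C0_def k_def mult.assoc)
    also have "\<dots> \<le> ennreal ((enn2real C0 + 1) * k) * Dform \<rho> V f"
      by (rule mult_right_mono[OF C0_le]) simp
    finally show "(\<integral>\<^sup>+x. ennreal ((f x - muV_int V f)\<^sup>2 * exp (V x) * gammaf \<rho> (norm x)) \<partial>muV V)
        \<le> ennreal ((enn2real C0 + 1) * k) * Dform \<rho> V f" .
  qed
qed

end
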